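(* Let $D\ge 1$. The underlying block design $\mathcal{F}$ of any $(T,N,D)$-tropical code is $(D-1)$-disjunct.
   Context: Tropical arithmetic on $\mathbb{R}\cup\{\infty\}$: $x\oplus y=\min(x,y)$, $x\odot y=x+y$, with $x\oplus\infty=x$ and $x\odot\infty=\infty$. For a matrix $S$ with $T$ rows and $N$ columns and a column vector $\mathbf{x}$ of length $N$, $S\odot\mathbf{x}$ is the vector whose $t$-th entry is $\min_{j}(S_{tj}+x_j)$. A $(T,N,D)$-tropical code is a matrix $S\in(\{0\}\cup\mathbb{N}\cup\{\infty\})^{T\times N}$ such that for any two distinct vectors $\mathbf{x},\mathbf{y}\in(\{0\}\cup\mathbb{N}\cup\{\infty\})^{N}$, each having at most $D$ finite entries, $S\odot\mathbf{x}\ne S\odot\mathbf{y}$. The underlying block design of $S$ is the multiset $\mathcal{F}=\{\{t\in[T]: S_{tj}<\infty\}: j\in[N]\}$ (one block per column, so $|\mathcal{F}|=N$); "distinct blocks" means blocks coming from distinct columns (they may coincide as sets). $\mathcal{F}$ is $m$-disjunct if $|Z\setminus(B_1\cup\dots\cup B_m)|\ge 1$ for all distinct blocks $Z,B_1,\dots,B_m\in\mathcal{F}$ (for $m=0$ this means every block is nonempty). *)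

theory Defs
  imports Main "HOL-Library.Extended_Nat"
begin

text \<open>Entries live in {0} \<union> N \<union> {\<infinity>}, rendered as enat (+ absorbs \<infinity>, min is \<oplus>).
  A T x N matrix is a function S :: nat \<Rightarrow> nat \<Rightarrow> enat, only entries with t < T, j < N matter;
  a vector of length N is x :: nat \<Rightarrow> enat, only entries j < N matter.\<close>

definition trop_mv :: "nat \<Rightarrow> (nat \<Rightarrow> nat \<Rightarrow> enat) \<Rightarrow> (nat \<Rightarrow> enat) \<Rightarrow> nat \<Rightarrow> enat" where
  "trop_mv N S x t = (INF j\<in>{..<N}. S t j + x j)"

definition finite_entries :: "nat \<Rightarrow> (nat \<Rightarrow> enat) \<Rightarrow> nat set" where
  "finite_entries N x = {j. j < N \<and> x j \<noteq> \<infinity>}"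

definition tropical_code :: "nat \<Rightarrow> nat \<Rightarrow> nat \<Rightarrow> (nat \<Rightarrow> nat \<Rightarrow> enat) \<Rightarrow> bool" where
  "tropical_code T N D S \<longleftrightarrow>
     (\<forall>x y. card (finite_entries N x) \<le> D \<longrightarrow> card (finite_entries N y) \<le> D \<longrightarrow>
        (\<exists>j<N. x j \<noteq> y j) \<longrightarrow> (\<exists>t<T. trop_mv N S x t \<noteq> trop_mv N S y t))"

definition block :: "nat \<Rightarrow> (nat \<Rightarrow> nat \<Rightarrow> enat) \<Rightarrow> nat \<Rightarrow> nat set" where
  "block T S j = {t. t < T \<and> S t j < \<infinity>}"

definition disjunct :: "nat \<Rightarrow> nat \<Rightarrow> (nat \<Rightarrow> nat \<Rightarrow> enat) \<Rightarrow> nat \<Rightarrow> bool" where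
  "disjunct T N S m \<longleftrightarrow>
     (\<forall>z<N. \<forall>I. I \<subseteq> {..<N} \<longrightarrow> z \<notin> I \<longrightarrow> card I = m \<longrightarrow>
        card (block T S z - (\<Union>i\<in>I. block T S i)) \<ge> 1)"

end

theory Submission
  imports Defs
begin

text \<open>Suppose the block of column z is covered by the blocks of a set I of D - 1 other
  columns. Let x be 0 on I and \<infinity> elsewhere, and let y agree with x except for a value c
  at z, where c is at least every finite entry of S in the columns of I. Whenever
  S t z is finite, row t meets some block of I, so (S \<odot> x) t \<le> c \<le> S t z + c; hence
  the new term never attains the minimum and S \<odot> x = S \<odot> y, although x \<noteq> y
  and both have at most D finite entries.\<close>

lemma trop_mv_le: "j < N \<Longrightarrow> trop_mv N S x t \<le> S t j + x j"
  unfolding trop_mv_def by (rule INF_lower) simp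

lemma trop_mv_fun_upd:
  assumes "z < N" and "x z = \<infinity>"
  shows "trop_mv N S (x(z := v)) t = min (S t z + v) (trop_mv N S x t)"
proof -
  let ?R = "\<lambda>x. INF j\<in>{..<N} - {z}. S t j + x j"
  have lessThan_split: "{..<N} = insert z ({..<N} - {z})" using assms(1) by auto
  have split: "trop_mv N S x t = min (S t z + x z) (?R x)" for x
    unfolding trop_mv_def by (subst (1) lessThan_split) (simp only: INF_insert inf_min)
  have "?R (x(z := v)) = ?R x" by (rule INF_cong) auto
  then show ?thesis using split[of "x(z := v)"] split[of x] assms(2) by simp
qed

lemma trop_mv_fun_upd_dominated:
  assumes "z < N" and "x z = \<infinity>" and "trop_mv N S x t \<le> S t z + v"
  shows "trop_mv N S (x(z := v)) t = trop_mv N S x t"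
  using assms by (simp add: trop_mv_fun_upd min_absorb2)

lemma finite_enat_values_bounded:
  fixes A :: "enat set"
  assumes "finite A"
  shows "\<exists>c. \<forall>a\<in>A. a \<noteq> \<infinity> \<longrightarrow> a \<le> enat c"
  using assms
proof (induction rule: finite_induct)
  case (insert a A)
  then obtain c where c: "\<forall>b\<in>A. b \<noteq> \<infinity> \<longrightarrow> b \<le> enat c" by blast
  show ?case
  proof (cases a)
    case (enat n)
    with c show ?thesis by (intro exI[of _ "max c n"]) (auto intro: order_trans)
  qed (use c in auto)
qed simp

lemma finite_block: "finite (block T S j)"
  unfolding block_def by simp

lemma finite_entries_indicator:
  assumes "I \<subseteq> {..<N}"
  shows "finite_entries N (\<lambda>j. if j \<in> I then 0 else \<infinity>) = I"
  using assms by (auto simp: finite_entries_def zero_enat_def)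

lemma covered_column_not_tropical_code:
  assumes code: "tropical_code T N D S"
    and z: "z < N" and I: "I \<subseteq> {..<N}" "z \<notin> I" "card I < D"
    and cover: "block T S z \<subseteq> (\<Union>i\<in>I. block T S i)"
  shows False
proof -
  have "finite I" using I(1) finite_subset by blast
  then obtain c where c: "\<And>t i. t < T \<Longrightarrow> i \<in> I \<Longrightarrow> S t i \<noteq> \<infinity> \<Longrightarrow> S t i \<le> enat c"
    using finite_enat_values_bounded[of "(\<lambda>(t, i). S t i) ` ({..<T} \<times> I)"] by auto
  define x :: "nat \<Rightarrow> enat" where "x = (\<lambda>j. if j \<in> I then 0 else \<infinity>)"
  define y where "y = x(z := enat c)"
  have entries_x: "finite_entries N x = I"
    unfolding x_def using I(1) by (rule finite_entries_indicator)
  have entries_y: "finite_entries N y = insert z I"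
    using entries_x z by (auto simp: finite_entries_def y_def)
  have "trop_mv N S x t \<le> S t z + enat c" if t: "t < T" for t
  proof (cases "S t z = \<infinity>")
    case False
    then have "t \<in> block T S z" using t by (simp add: block_def enat_ord_simps(4))
    with cover obtain i where i: "i \<in> I" "t \<in> block T S i" by auto
    have "trop_mv N S x t \<le> S t i + x i" using i(1) I(1) by (intro trop_mv_le) auto
    also have "\<dots> \<le> enat c" using i c t by (simp add: x_def block_def)
    finally show ?thesis by (simp add: order_trans)
  qed simp
  then have "\<forall>t<T. trop_mv N S x t = trop_mv N S y t"
    using z I(2) by (simp add: y_def x_def trop_mv_fun_upd_dominated)
  moreover have "\<exists>j<N. x j \<noteq> y j" using z I(2) by (auto simp: x_def y_def)
  moreover have "card (finite_entries N y) \<le> D" "card (finite_entries N x) \<le> D"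
    using entries_x entries_y \<open>finite I\<close> I(2,3) by auto
  ultimately show False using code unfolding tropical_code_def by blast
qed

theorem mainTheorem9:
  fixes T N D :: nat and S :: "nat \<Rightarrow> nat \<Rightarrow> enat"
  assumes "D \<ge> 1"
    and "tropical_code T N D S"
  shows "disjunct T N S (D - 1)"
  unfolding disjunct_def
proof (intro allI impI)
  fix z I
  assume z: "z < N" and I: "I \<subseteq> {..<N}" "z \<notin> I" "card I = D - 1"
  have "\<not> block T S z \<subseteq> (\<Union>i\<in>I. block T S i)"
    using covered_column_not_tropical_code[OF assms(2) z I(1,2)] I(3) assms(1) by auto
  then show "card (block T S z - (\<Union>i\<in>I. block T S i)) \<ge> 1"
    using finite_block[of T S z] by (simp add: Suc_le_eq card_gt_0_iff)
qed

end
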